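(* For every input $\sigma$ of List Update with Delays, every time $t$ and every $N\in[n]$, let $K$ be the set of indices $k\in[m]$ such that $e_k$ lies in one of positions $1,\dots,N$ of ALG's list at time $t$ and $r_k$ is, at time $t$, either active in ALG or frozen with $RC_k$ in ALG. Then $$\sum_{k\in K}d_k\le 2N.$$
   Context: List Update with Delays. A set $\mathbb{E}$ of $n$ elements is kept in an ordered list (position $1$ is the head). An input $\sigma$ is a sequence of requests $r_1,\dots,r_m$; request $r_k$ specifies an element $e_k\in\mathbb{E}$, an arrival time $a_k$ and a delay function $D_k$ which is non-negative, non-decreasing, and $0$ up to time $a_k$. An algorithm may perform an access up to position $i$ at cost $i$, serving every pending request whose element currently lies in positions $1,\dots,i$, and may swap adjacent elements at cost $1$; actions are instantaneous. A request served at time $s$ incurs delay cost $D_k(s)$. Algorithm ALG maintains a request counter $RC_k$ for each request and an element counter $EC_e$ for each element, with $EC_e=0$ initially. When $r_k$ arrives, $RC_k$ is created with value $0$. While $r_k$ is pending in ALG, $RC_k$ and $EC_{e_k}$ each increase by exactly the delay $r_k$ incurs; after $r_k$ is served, $RC_k$ stops increasing until it is deleted. Events: (i) prefix-request-counters event on $\ell\in[n]$, occurring when the sum of the non-deleted request counters of requests whose elements are currently in positions $1,\dots,\ell$ reaches $\ell$: ALG accesses the first $\min(2\ell,n)$ positions and deletes the request counters of requests for the elements in the first $\ell$ positions; (ii) element-counter event on $e$, occurring when $EC_e$ reaches the current position $\ell$ of $e$: ALG accesses the first $\min(2\ell,n)$ positions, deletes all request counters of requests for $e$, sets $EC_e\leftarrow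 0$, and moves $e$ to the front by $\ell-1$ adjacent swaps. For a request $r_k$ let $s_k$ be the time ALG serves it ($s_k=\infty$ if never); $d_k(t)=D_k(\min(t,s_k))$ and $d_k=\sup_t d_k(t)$. Request $r_k$ is active in ALG from its arrival until ALG serves it; frozen with $RC_k$ from the time ALG serves it until $RC_k$ is deleted; frozen without $RC_k$ from the deletion of $RC_k$ until the next element-counter event on $e_k$ (at which $EC_{e_k}$ is zeroed); deleted afterwards. *)

theory Defs
  imports "HOL-Analysis.Analysis"
begin

(* Elements are 0..<n, requests are 0..<m.  Request k asks for element  el k,
   arrives at time  arr k  and has delay function  D k.
   The list is a  nat list  (head = position 1); the initial list is L0.
   An execution of ALG is described by the finite list  evs  of its events,
   each a pair (time, action), in the order ALG performs them. *)

datatype act = PrefixEv nat  (* prefix-request-counters event on l *)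
             | ElemEv nat

(* 1-based position of x in the list *)
fun lpos :: "nat list \<Rightarrow> nat \<Rightarrow> nat" where
  "lpos [] x = 0"
| "lpos (y # ys) x = (if x = y then 1 else Suc (lpos ys x))"

fun apply_act :: "nat list \<Rightarrow> act \<Rightarrow> nat list" where
  "apply_act L (PrefixEv l) = L"
| "apply_act L (ElemEv e) = e # remove1 e L"

definition lst :: "nat list \<Rightarrow> (real \<times> act) list \<Rightarrow> nat \<Rightarrow> nat list" where
  "lst L0 evs j = foldl (\<lambda>L a. apply_act L (snd a)) L0 (take j evs)"

fun thr :: "nat list \<Rightarrow> act \<Rightarrow> nat" where
  "thr L (PrefixEv l) = l"
| "thr L (ElemEv e) = lpos L e"

(* event i (an access to the first min(2l,n) positions) serves request k *)
definition serves :: "nat \<Rightarrow> (nat \<Rightarrow> nat) \<Rightarrow> (nat \<Rightarrow> real) \<Rightarrow> nat list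
    \<Rightarrow> (real \<times> act) list \<Rightarrow> nat \<Rightarrow> nat \<Rightarrow> bool" where
  "serves n el arr L0 evs i k \<longleftrightarrow> i < length evs \<and> arr k \<le> fst (evs ! i) \<and>
     lpos (lst L0 evs i) (el k) \<le> min (2 * thr (lst L0 evs i) (snd (evs ! i))) n"

definition served_before where
  "served_before n el arr L0 evs j k \<longleftrightarrow> (\<exists>i<j. serves n el arr L0 evs i k)"

definition served where
  "served n el arr L0 evs k \<longleftrightarrow> (\<exists>i. serves n el arr L0 evs i k)"

(* s_k : time at which ALG serves r_k (only meaningful if served) *)
definition stime where
  "stime n el arr L0 evs k = fst (evs ! (LEAST i. serves n el arr L0 evs i k))"

(* d_k(t) = D_k(min(t, s_k)), with s_k = infinity if never served *)
definition dfun :: "nat \<Rightarrow> (nat \<Rightarrow> nat) \<Rightarrow> (nat \<Rightarrow> real) \<Rightarrow> (nat \<Rightarrow> real \<Rightarrow> real)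
    \<Rightarrow> nat list \<Rightarrow> (real \<times> act) list \<Rightarrow> nat \<Rightarrow> real \<Rightarrow> real" where
  "dfun n el arr D L0 evs k t =
     D k (if served n el arr L0 evs k then min t (stime n el arr L0 evs k) else t)"

definition dtot where
  "dtot n el arr D L0 evs k = (SUP t. ereal (dfun n el arr D L0 evs k t))"

definition deletes where
  "deletes el arr L0 evs i k \<longleftrightarrow> i < length evs \<and> arr k \<le> fst (evs ! i) \<and>
     (case snd (evs ! i) of
        PrefixEv l \<Rightarrow> lpos (lst L0 evs i) (el k) \<le> l
      | ElemEv e \<Rightarrow> e = el k)"

definition deleted where
  "deleted el arr L0 evs j k \<longleftrightarrow> (\<exists>i<j. deletes el arr L0 evs i k)"

definition RCsum where
  "RCsum n m el arr D L0 evs j t l =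
     (\<Sum>k\<in>{k. k < m \<and> arr k \<le> t \<and> \<not> deleted el arr L0 evs j k \<and>
                lpos (lst L0 evs j) (el k) \<le> l}. dfun n el arr D L0 evs k t)"

(* element counter EC_e after the first j events, at time t: the delay incurred by
   requests for e since the last element-counter event on e (EC_e = 0 initially) *)
definition EC where
  "EC n m el arr D L0 evs j e t =
     (\<Sum>k\<in>{k. k < m \<and> el k = e}.
        dfun n el arr D L0 evs k t -
        (if \<exists>i<j. snd (evs ! i) = ElemEv e
         then dfun n el arr D L0 evs k (fst (evs ! (GREATEST i. i < j \<and> snd (evs ! i) = ElemEv e)))
         else 0))"

(* the condition triggering event j, evaluated in the state after the first j events *)
definition triggered where
  "triggered n m el arr D L0 evs j \<longleftrightarrow>
     (case snd (evs ! j) of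
        PrefixEv l \<Rightarrow> 1 \<le> l \<and> l \<le> n \<and> RCsum n m el arr D L0 evs j (fst (evs ! j)) l \<ge> real l
      | ElemEv e \<Rightarrow> e < n \<and> EC n m el arr D L0 evs j e (fst (evs ! j)) \<ge> real (lpos (lst L0 evs j) e))"

definition nev :: "(real \<times> act) list \<Rightarrow> real \<Rightarrow> nat" where
  "nev evs t = card {i. i < length evs \<and> fst (evs ! i) \<le> t}"

(* evs is an execution of ALG on the input: events are in time order, each event
   is triggered when it is performed, and after all events up to time t no
   counter has reached its threshold (so every event happens as soon as triggered) *)
definition alg_run where
  "alg_run n m el arr D L0 evs \<longleftrightarrow>
     sorted (map fst evs) \<and>
     (\<forall>j < length evs. triggered n m el arr D L0 evs j) \<and>
     (\<forall>t. (\<forall>l\<in>{1..n}. RCsum n m el arr D L0 evs (nev evs t) t l < real l) \<and>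
          (\<forall>e<n. EC n m el arr D L0 evs (nev evs t) e t < real (lpos (lst L0 evs (nev evs t)) e)))"

definition valid_input where
  "valid_input n m el arr D L0 \<longleftrightarrow>
     distinct L0 \<and> set L0 = {0..<n} \<and>
     (\<forall>k<m. el k < n \<and> (\<forall>t. 0 \<le> D k t) \<and> mono (D k) \<and>
            (\<forall>t\<le>arr k. D k t = 0) \<and> continuous_on UNIV (D k))"

end

theory Submission
  imports Defs
begin

(* Split K according to the position p of the element: requests with p <= h = (N - 1) div 2
   contribute at most 2h <= N - 1 by induction on N; call the others H.  Let i be the first event
   from time t on whose parameter l satisfies 2l >= N.  All earlier events have l <= h, so they
   neither move elements beyond position h nor delete counters of requests for such elements:
   until event i, every request of H still contributes to the prefix-request-counter sum on N,
   which ALG keeps below N.  Event i accesses at least N positions and serves all of H, so their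
   delays are frozen from then on, and by continuity the total delay of H is at most N. *)

lemma lpos_bounds: "x \<in> set L \<Longrightarrow> 1 \<le> lpos L x \<and> lpos L x \<le> length L"
  by (induction L) auto

lemma lpos_move_to_front:
  "lpos L e < lpos L x \<Longrightarrow> lpos (e # remove1 e L) x = lpos L x"
  by (induction L) auto

lemma sum_SUP_le_of_mono:
  fixes f :: "'a \<Rightarrow> 'b::linorder \<Rightarrow> real"
  assumes mono: "\<And>k. k \<in> A \<Longrightarrow> mono (f k)"
    and nonneg: "\<And>k x. k \<in> A \<Longrightarrow> 0 \<le> f k x"
    and bound: "\<And>x. (\<Sum>k\<in>A. f k x) \<le> B"
  shows "(\<Sum>k\<in>A. SUP x. ereal (f k x)) \<le> ereal B"
proof -
  have "(\<Sum>k\<in>A. SUP x. ereal (f k x)) = (SUP x. \<Sum>k\<in>A. ereal (f k x))"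
  proof (rule SUP_ereal_sum_directed[symmetric])
    fix K and x y :: 'b assume "K \<subseteq> A"
    then show "\<exists>z\<in>UNIV. \<forall>k\<in>K. ereal (f k x) \<le> ereal (f k z) \<and> ereal (f k y) \<le> ereal (f k z)"
      by (intro bexI[of _ "max x y"]) (auto intro!: monoD[OF mono])
  qed (use nonneg in auto)
  also have "\<dots> \<le> ereal B"
    using bound by (intro SUP_least) (simp add: sum_ereal)
  finally show ?thesis .
qed

lemma down_closed_eq_lessThan_card:
  fixes S :: "nat set"
  assumes "finite S" and down: "\<And>i j. j \<in> S \<Longrightarrow> i \<le> j \<Longrightarrow> i \<in> S"
  shows "S = {..<card S}"
proof (intro set_eqI iffI)
  fix i assume "i \<in> S"
  then have "{..i} \<subseteq> S" using down by blast
  then have "card {..i} \<le> card S" using \<open>finite S\<close> by (rule card_mono[rotated])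
  then show "i \<in> {..<card S}" by simp
next
  fix i assume "i \<in> {..<card S}"
  show "i \<in> S"
  proof (rule ccontr)
    assume "i \<notin> S"
    then have "S \<subseteq> {..<i}" using down by (meson lessThan_iff not_le subsetI)
    then have "card S \<le> card {..<i}" by (rule card_mono[rotated]) simp
    then show False using \<open>i \<in> {..<card S}\<close> by simp
  qed
qed

lemma continuous_le_at_left_end:
  fixes g :: "real \<Rightarrow> real"
  assumes "continuous (at_left s) g" "t < s" "\<And>x. t < x \<Longrightarrow> x < s \<Longrightarrow> g x \<le> B"
  shows "g s \<le> B"
proof (rule tendsto_upperbound)
  show "(g \<longlongrightarrow> g s) (at_left s)" using assms(1) by (simp add: continuous_within)
  show "\<forall>\<^sub>F x in at_left s. g x \<le> B"
    using eventually_at_left_real[OF \<open>t < s\<close>] by eventually_elim (use assms(3) in auto)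
qed simp

lemma first_index_or_end:
  fixes j l :: nat
  assumes "j \<le> l"
  obtains i where "j \<le> i" "i \<le> l" "\<forall>q\<in>{j..<i}. \<not> P q" "i < l \<Longrightarrow> P i"
proof (cases "\<exists>q\<in>{j..<l}. P q")
  case True
  define i where "i = (LEAST q. q \<in> {j..<l} \<and> P q)"
  have "i \<in> {j..<l} \<and> P i"
    unfolding i_def by (rule LeastI_ex) (use True in blast)
  moreover have "\<not> P q" if "q \<in> {j..<i}" for q
    using not_less_Least[of q "\<lambda>q. q \<in> {j..<l} \<and> P q"] that \<open>i \<in> {j..<l} \<and> P i\<close>
    by (auto simp: i_def)
  ultimately show thesis using that by auto
next
  case False
  then show thesis using that[of l] assms by auto
qed

locale alg_execution =
  fixes n m :: nat and el :: "nat \<Rightarrow> nat" and arr :: "nat \<Rightarrow> real"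
    and D :: "nat \<Rightarrow> real \<Rightarrow> real" and L0 :: "nat list" and evs :: "(real \<times> act) list"
  assumes valid: "valid_input n m el arr D L0"
    and run: "alg_run n m el arr D L0 evs"
begin

abbreviation pos :: "nat \<Rightarrow> nat \<Rightarrow> nat" where "pos j x \<equiv> lpos (lst L0 evs j) x"
abbreviation ev_time :: "nat \<Rightarrow> real" where "ev_time i \<equiv> fst (evs ! i)"
abbreviation ev_act :: "nat \<Rightarrow> act" where "ev_act i \<equiv> snd (evs ! i)"
abbreviation level :: "nat \<Rightarrow> nat" where "level i \<equiv> thr (lst L0 evs i) (ev_act i)"
abbreviation delay :: "nat \<Rightarrow> real \<Rightarrow> real" where "delay k \<equiv> dfun n el arr D L0 evs k"

lemma el_less: "k < m \<Longrightarrow> el k < n"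
  using valid by (simp add: valid_input_def)

lemma ev_time_mono: "i \<le> i' \<Longrightarrow> i' < length evs \<Longrightarrow> ev_time i \<le> ev_time i'"
  using run sorted_nth_mono[of "map fst evs" i i'] by (simp add: alg_run_def)

lemma ElemEv_less: "i < length evs \<Longrightarrow> ev_act i = ElemEv e \<Longrightarrow> e < n"
  using run by (auto simp: alg_run_def triggered_def)

lemma lst_Suc: "i < length evs \<Longrightarrow> lst L0 evs (Suc i) = apply_act (lst L0 evs i) (ev_act i)"
  by (simp add: lst_def take_Suc_conv_app_nth)

lemma lst_permutation: "distinct (lst L0 evs j) \<and> set (lst L0 evs j) = {0..<n}"
proof (induction j)
  case 0
  then show ?case using valid by (simp add: lst_def valid_input_def)
next
  case (Suc j)
  show ?case
  proof (cases "j < length evs")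
    case True
    show ?thesis
    proof (cases "ev_act j")
      case (PrefixEv l)
      then show ?thesis using Suc lst_Suc[OF True] by simp
    next
      case (ElemEv e)
      have "e \<in> set (lst L0 evs j)" using Suc ElemEv_less[OF True ElemEv] by simp
      then have "set (e # remove1 e (lst L0 evs j)) = set (lst L0 evs j)"
        using Suc.IH set_remove1_eq by fastforce
      then show ?thesis using Suc.IH lst_Suc[OF True] ElemEv by simp
    qed
  next
    case False
    then show ?thesis using Suc by (simp add: lst_def)
  qed
qed

lemma pos_bounds: "x < n \<Longrightarrow> 1 \<le> pos j x \<and> pos j x \<le> n"
  using lpos_bounds[of x "lst L0 evs j"] lst_permutation[of j] distinct_card[of "lst L0 evs j"]
  by simp

lemma nev_eq_lessThan: "{i. i < length evs \<and> ev_time i \<le> \<tau>} = {..<nev evs \<tau>}"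
  unfolding nev_def
  by (rule down_closed_eq_lessThan_card) (auto intro: order_trans[OF ev_time_mono])

lemma less_nev_iff: "i < length evs \<Longrightarrow> i < nev evs \<tau> \<longleftrightarrow> ev_time i \<le> \<tau>"
  using nev_eq_lessThan[of \<tau>] by blast

lemma nev_le_length: "nev evs \<tau> \<le> length evs"
  unfolding nev_def by (rule order_trans[OF card_mono[of "{..<length evs}"]]) auto

lemma nev_mono: "\<tau> \<le> \<tau>' \<Longrightarrow> nev evs \<tau> \<le> nev evs \<tau>'"
  unfolding nev_def by (rule card_mono) auto

lemma delay_nonneg: "k < m \<Longrightarrow> 0 \<le> delay k \<tau>"
  using valid by (simp add: valid_input_def dfun_def)

lemma delay_mono: "k < m \<Longrightarrow> mono (delay k)"
  using valid unfolding valid_input_def dfun_def mono_def by (auto intro: monoD)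

lemma delay_continuous: "k < m \<Longrightarrow> continuous_on UNIV (delay k)"
proof -
  assume "k < m"
  then have "continuous_on UNIV (D k)" using valid by (simp add: valid_input_def)
  moreover have "continuous_on UNIV (\<lambda>x. if served n el arr L0 evs k then min x (stime n el arr L0 evs k) else x)"
    by (cases "served n el arr L0 evs k") (auto intro!: continuous_intros)
  ultimately show ?thesis
    unfolding dfun_def[abs_def] using continuous_on_compose2 by blast
qed

lemma delay_frozen_after_serves:
  assumes "serves n el arr L0 evs i k" "ev_time i \<le> \<tau>"
  shows "delay k \<tau> = delay k (ev_time i)"
proof -
  have "(LEAST i. serves n el arr L0 evs i k) \<le> i" "i < length evs"
    using assms(1) by (auto intro: Least_le simp: serves_def)
  then have "stime n el arr L0 evs k \<le> ev_time i"
    unfolding stime_def by (rule ev_time_mono)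
  then show ?thesis using assms by (auto simp: dfun_def served_def)
qed

lemma deletes_imp_serves: "deletes el arr L0 evs i k \<Longrightarrow> serves n el arr L0 evs i k"
  using run pos_bounds[of "el k" i]
  by (cases "ev_act i") (auto simp: deletes_def serves_def alg_run_def triggered_def)

(* the set K of the theorem: r_k is active, or frozen with RC_k *)
definition live_requests :: "real \<Rightarrow> nat \<Rightarrow> nat set" where
  "live_requests t N = {k. k < m \<and> pos (nev evs t) (el k) \<le> N \<and>
     ((arr k \<le> t \<and> \<not> served_before n el arr L0 evs (nev evs t) k) \<or>
      (served_before n el arr L0 evs (nev evs t) k \<and> \<not> deleted el arr L0 evs (nev evs t) k))}"

lemma live_requestsD:
  assumes "k \<in> live_requests t N"
  shows "k < m" "arr k \<le> t" "\<not> deleted el arr L0 evs (nev evs t) k" "pos (nev evs t) (el k) \<le> N"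
proof -
  have arrived: "arr k \<le> t" if sb: "served_before n el arr L0 evs (nev evs t) k"
  proof -
    obtain i where "i < nev evs t" "serves n el arr L0 evs i k"
      using sb unfolding served_before_def by blast
    then show ?thesis
      using less_nev_iff[of i t] nev_le_length[of t] by (auto simp: serves_def)
  qed
  have "\<not> deleted el arr L0 evs (nev evs t) k" if "\<not> served_before n el arr L0 evs (nev evs t) k"
    using that deletes_imp_serves by (auto simp: served_before_def deleted_def)
  with arrived assms show "k < m" "arr k \<le> t" "\<not> deleted el arr L0 evs (nev evs t) k"
      "pos (nev evs t) (el k) \<le> N"
    unfolding live_requests_def by auto
qed

lemma finite_live_requests: "finite (live_requests t N)"
  by (rule finite_subset[of _ "{..<m}"]) (auto simp: live_requests_def)

lemma pos_stable:
  assumes "j \<le> i" "i \<le> length evs" "\<forall>q\<in>{j..<i}. level q \<le> h" "h < pos j x"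
  shows "pos i x = pos j x"
  using assms(1-3)
proof (induction i rule: dec_induct)
  case base
  then show ?case by simp
next
  case (step q)
  then have IH: "pos q x = pos j x" and q: "q < length evs" "level q \<le> h" by auto
  show ?case
  proof (cases "ev_act q")
    case (PrefixEv l)
    then show ?thesis using lst_Suc[OF q(1)] IH by simp
  next
    case (ElemEv e)
    then have "pos q e < pos q x" using q(2) IH assms(4) by simp
    then show ?thesis using lst_Suc[OF q(1)] IH ElemEv lpos_move_to_front by simp
  qed
qed

lemma not_deletes_if_level_below: "level i \<le> h \<Longrightarrow> h < pos i (el k) \<Longrightarrow> \<not> deletes el arr L0 evs i k"
  by (cases "ev_act i") (auto simp: deletes_def)

lemma not_deleted_stable:
  assumes "j \<le> i" "i \<le> length evs" and quiet: "\<forall>q\<in>{j..<i}. level q \<le> h"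
    and "h < pos j (el k)" "\<not> deleted el arr L0 evs j k"
  shows "\<not> deleted el arr L0 evs i k"
proof
  assume "deleted el arr L0 evs i k"
  then obtain q where q: "q < i" "deletes el arr L0 evs q k" by (auto simp: deleted_def)
  with assms(5) have "j \<le> q" unfolding deleted_def by (meson leI)
  then have "pos q (el k) = pos j (el k)" "level q \<le> h"
    using pos_stable[of j q h] q assms by auto
  then show False
    using not_deletes_if_level_below[of q h k] q(2) assms(4) by simp
qed

lemma tail_delay_sum_less:
  assumes N: "1 \<le> N" "N \<le> n" and "t \<le> \<tau>" "nev evs \<tau> \<le> i" "i \<le> length evs"
    and quiet: "\<forall>q\<in>{nev evs t..<i}. level q \<le> h"
  shows "(\<Sum>k\<in>{k \<in> live_requests t N. h < pos (nev evs t) (el k)}. delay k \<tau>) < N"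
proof -
  define j q where "j = nev evs t" and "q = nev evs \<tau>"
  have "j \<le> q" "q \<le> length evs" "\<forall>p\<in>{j..<q}. level p \<le> h"
    using nev_mono[OF \<open>t \<le> \<tau>\<close>] assms by (auto simp: j_def q_def)
  then have sub: "{k \<in> live_requests t N. h < pos j (el k)} \<subseteq>
      {k. k < m \<and> arr k \<le> \<tau> \<and> \<not> deleted el arr L0 evs q k \<and> pos q (el k) \<le> N}"
    using live_requestsD[of _ t N] pos_stable[of j q h] not_deleted_stable[of j q h]
      \<open>t \<le> \<tau>\<close> by (fastforce simp: j_def)
  have "(\<Sum>k\<in>{k \<in> live_requests t N. h < pos j (el k)}. delay k \<tau>) \<le> RCsum n m el arr D L0 evs q \<tau> N"
    unfolding RCsum_def by (rule sum_mono2[OF _ sub]) (auto intro: delay_nonneg)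
  also have "\<dots> < N"
    using run N unfolding alg_run_def q_def by auto
  finally show ?thesis by (simp add: j_def)
qed

lemma tail_served:
  assumes "i < length evs" "nev evs t \<le> i" "N \<le> 2 * level i" "N \<le> n"
    and quiet: "\<forall>q\<in>{nev evs t..<i}. level q \<le> h"
    and k: "k \<in> live_requests t N" "h < pos (nev evs t) (el k)"
  shows "\<exists>i'\<le>i. serves n el arr L0 evs i' k"
proof (cases "served_before n el arr L0 evs (nev evs t) k")
  case True
  then show ?thesis
    using assms(2) unfolding served_before_def by (meson le_trans less_imp_le_nat)
next
  case False
  have "t < ev_time i" using less_nev_iff[OF assms(1), of t] assms(2) by (meson leD not_le)
  moreover have "pos i (el k) = pos (nev evs t) (el k)"
    using pos_stable assms(1,2) quiet k(2) by simp
  ultimately have "serves n el arr L0 evs i k"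
    using live_requestsD[OF k(1)] assms(1,3,4) by (simp add: serves_def)
  then show ?thesis by blast
qed

lemma tail_delay_sum_le:
  assumes N: "1 \<le> N" "N \<le> n" and "t \<le> \<tau>"
    and i: "nev evs t \<le> i" "i \<le> length evs" and wide: "i < length evs \<Longrightarrow> N \<le> 2 * level i"
    and quiet: "\<forall>q\<in>{nev evs t..<i}. level q \<le> h"
  shows "(\<Sum>k\<in>{k \<in> live_requests t N. h < pos (nev evs t) (el k)}. delay k \<tau>) \<le> N"
proof (cases "i < length evs \<and> ev_time i \<le> \<tau>")
  case True
  define H where "H = {k \<in> live_requests t N. h < pos (nev evs t) (el k)}"
  define g where "g x = (\<Sum>k\<in>H. delay k x)" for x
  have "g \<tau> = g (ev_time i)"
    unfolding g_def
  proof (rule sum.cong)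
    fix k assume "k \<in> H"
    then obtain i' where "i' \<le> i" and serves: "serves n el arr L0 evs i' k"
      using tail_served[of i t N h k] True i wide N quiet by (auto simp: H_def)
    then have "ev_time i' \<le> ev_time i" using ev_time_mono True by blast
    then show "delay k \<tau> = delay k (ev_time i)"
      using delay_frozen_after_serves[OF serves, of \<tau>]
        delay_frozen_after_serves[OF serves, of "ev_time i"] True by simp
  qed simp
  also have "\<dots> \<le> N"
  proof (rule continuous_le_at_left_end[where g = g and t = t])
    have "continuous_on UNIV g"
      unfolding g_def H_def
      by (intro continuous_on_sum) (use live_requestsD delay_continuous in blast)
    then show "continuous (at_left (ev_time i)) g"
      by (simp add: continuous_on_eq_continuous_at continuous_at_imp_continuous_at_within)
    show "t < ev_time i" using less_nev_iff[of i t] i True by simp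
    show "g x \<le> N" if "t < x" "x < ev_time i" for x
      using tail_delay_sum_less[of N t x i h] less_nev_iff[of i x] that True i N quiet
      by (force simp: g_def H_def)
  qed
  finally show ?thesis by (simp add: g_def H_def)
next
  case False
  then have "nev evs \<tau> \<le> i"
    using less_nev_iff[of i \<tau>] nev_le_length[of \<tau>] i by (cases "i < length evs") auto
  then show ?thesis
    using tail_delay_sum_less[of N t \<tau> i h] assms by simp
qed

lemma tail_dtot_sum_le:
  assumes N: "1 \<le> N" "N \<le> n"
  shows "(\<Sum>k\<in>{k \<in> live_requests t N. (N - 1) div 2 < pos (nev evs t) (el k)}.
           dtot n el arr D L0 evs k) \<le> ereal N"
proof -
  define h where "h = (N - 1) div 2"
  define H where "H = {k \<in> live_requests t N. h < pos (nev evs t) (el k)}"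
  have H_m: "k < m" if "k \<in> H" for k
    using that live_requestsD by (auto simp: H_def)
  obtain i where i: "nev evs t \<le> i" "i \<le> length evs"
      and below: "\<forall>q\<in>{nev evs t..<i}. \<not> N \<le> 2 * level q"
      and wide: "i < length evs \<Longrightarrow> N \<le> 2 * level i"
    using first_index_or_end[where P = "\<lambda>q. N \<le> 2 * level q", OF nev_le_length[of t]] by blast
  have quiet: "\<forall>q\<in>{nev evs t..<i}. level q \<le> h"
    using below by (auto simp: h_def)
  have "(\<Sum>k\<in>H. delay k \<tau>) \<le> N" for \<tau>
  proof -
    have "(\<Sum>k\<in>H. delay k \<tau>) \<le> (\<Sum>k\<in>H. delay k (max t \<tau>))"
      by (intro sum_mono monoD[OF delay_mono] H_m) auto
    also have "\<dots> \<le> N"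
      using tail_delay_sum_le[of N t "max t \<tau>" i h] N i wide quiet by (simp add: H_def)
    finally show ?thesis .
  qed
  then show ?thesis
    unfolding dtot_def H_def[symmetric] h_def[symmetric]
    by (intro sum_SUP_le_of_mono) (auto intro: H_m delay_mono delay_nonneg)
qed

lemma live_dtot_sum_le:
  "N \<le> n \<Longrightarrow> (\<Sum>k\<in>live_requests t N. dtot n el arr D L0 evs k) \<le> ereal (2 * real N)"
proof (induction N rule: less_induct)
  case (less N)
  show ?case
  proof (cases "N = 0")
    case True
    then have "live_requests t N = {}"
      using live_requestsD pos_bounds el_less by (meson equals0I not_one_le_zero order_trans)
    then show ?thesis by simp
  next
    case False
    define h where "h = (N - 1) div 2"
    define H where "H = {k \<in> live_requests t N. h < pos (nev evs t) (el k)}"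
    have split: "live_requests t N = live_requests t h \<union> H" "live_requests t h \<inter> H = {}"
      by (auto simp: live_requests_def H_def h_def)
    have "finite H" using finite_live_requests by (simp add: H_def)
    then have "(\<Sum>k\<in>live_requests t N. dtot n el arr D L0 evs k) =
        (\<Sum>k\<in>live_requests t h. dtot n el arr D L0 evs k) + (\<Sum>k\<in>H. dtot n el arr D L0 evs k)"
      unfolding split(1) using sum.union_disjoint[OF finite_live_requests _ split(2)] by blast
    also have "\<dots> \<le> ereal (2 * real h) + ereal N"
      using less False tail_dtot_sum_le[of N t] by (intro add_mono) (auto simp: H_def h_def)
    also have "\<dots> \<le> ereal (2 * real N)"
      using False by (simp add: h_def)
    finally show ?thesis .
  qed
qed

end

theorem mainTheorem12:
  fixes n m :: nat and el :: "nat \<Rightarrow> nat" and arr :: "nat \<Rightarrow> real"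
    and D :: "nat \<Rightarrow> real \<Rightarrow> real" and L0 :: "nat list" and evs :: "(real \<times> act) list"
    and t :: real and N :: nat
  assumes "valid_input n m el arr D L0"
    and "alg_run n m el arr D L0 evs"
    and "1 \<le> N" and "N \<le> n"
  shows "(\<Sum>k\<in>{k. k < m \<and> lpos (lst L0 evs (nev evs t)) (el k) \<le> N \<and>
              ((arr k \<le> t \<and> \<not> served_before n el arr L0 evs (nev evs t) k) \<or>
               (served_before n el arr L0 evs (nev evs t) k \<and> \<not> deleted el arr L0 evs (nev evs t) k))}.
            dtot n el arr D L0 evs k) \<le> ereal (2 * real N)"
proof -
  interpret alg_execution n m el arr D L0 evs
    using assms(1,2) by unfold_locales
  show ?thesis
    using live_dtot_sum_le[OF assms(4), of t] by (simp add: live_requests_def)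
qed

end
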